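(* Let $T_1=(V_1,E_1)$ and $T_2=(V_2,E_2)$ be trees with $|V_1|=|V_2|=n$. Then $S_{T_1}\cap S_{T_2}\ne\emptyset$ if and only if $T_1$ and $T_2$ are isomorphic.
   Context: $\mathbb{C}[S_n]$ is the group algebra of the symmetric group $S_n$. A labeling of a graph $G=(V,E)$ with $|V|=n$ is a bijection $\mathcal{L}:V\to\{1,\dots,n\}$; under it an edge $\{u,v\}$ corresponds to the transposition $(\mathcal{L}(u)\,\mathcal{L}(v))\in S_n$. For a labeling $\mathcal{L}$ and an ordering $\pi=(e_1,\dots,e_m)$ of $E$, $\mathcal{K}_{\mathcal{L},\pi}(G)=n!\,(1-t_1)(1-t_2)\cdots(1-t_m)\in\mathbb{C}[S_n]$, where $t_r$ is the transposition corresponding to $e_r$ under $\mathcal{L}$ and the product is in the order of $\pi$. Define $S_G=\{\mathcal{K}_{\mathcal{L},\pi}(G):\mathcal{L}\text{ a labeling of }V,\ \pi\text{ an ordering of }E\}$. *)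

theory Defs
  imports "HOL-Combinatorics.Permutations" Complex_Main
begin

text \<open>An element of C[S_n] is a function from permutations to complex numbers, zero outside S_n.
  Group product of permutations is composition (sigma o tau).\<close>

definition Sym :: "nat \<Rightarrow> (nat \<Rightarrow> nat) set" where
  "Sym n = {p. p permutes {1..n}}"

type_synonym galg = "(nat \<Rightarrow> nat) \<Rightarrow> complex"

definition ga_basis :: "(nat \<Rightarrow> nat) \<Rightarrow> galg" where
  "ga_basis p = (\<lambda>\<sigma>. if \<sigma> = p then 1 else 0)"

definition ga_one :: galg where
  "ga_one = ga_basis id"

definition ga_mult :: "nat \<Rightarrow> galg \<Rightarrow> galg \<Rightarrow> galg" where
  "ga_mult n f g = (\<lambda>\<sigma>. \<Sum>\<tau>\<in>Sym n. f \<tau> * g (inv \<tau> \<circ> \<sigma>))"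

definition ga_scale :: "complex \<Rightarrow> galg \<Rightarrow> galg" where
  "ga_scale c f = (\<lambda>\<sigma>. c * f \<sigma>)"

definition ga_diff :: "galg \<Rightarrow> galg \<Rightarrow> galg" where
  "ga_diff f g = (\<lambda>\<sigma>. f \<sigma> - g \<sigma>)"

definition ga_prod :: "nat \<Rightarrow> galg list \<Rightarrow> galg" where
  "ga_prod n xs = foldr (ga_mult n) xs ga_one"

definition simple_graph :: "'a set \<Rightarrow> 'a set set \<Rightarrow> bool" where
  "simple_graph V E \<longleftrightarrow> finite V \<and> (\<forall>e\<in>E. \<exists>u v. u \<in> V \<and> v \<in> V \<and> u \<noteq> v \<and> e = {u, v})"

definition adj :: "'a set set \<Rightarrow> 'a \<Rightarrow> 'a \<Rightarrow> bool" where
  "adj E u v \<longleftrightarrow> {u, v} \<in> E"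

definition walk :: "'a set \<Rightarrow> 'a set set \<Rightarrow> 'a list \<Rightarrow> bool" where
  "walk V E ws \<longleftrightarrow> ws \<noteq> [] \<and> set ws \<subseteq> V \<and> (\<forall>i. Suc i < length ws \<longrightarrow> adj E (ws ! i) (ws ! Suc i))"

definition connected_graph :: "'a set \<Rightarrow> 'a set set \<Rightarrow> bool" where
  "connected_graph V E \<longleftrightarrow>
     (\<forall>u\<in>V. \<forall>v\<in>V. \<exists>ws. walk V E ws \<and> hd ws = u \<and> last ws = v)"

definition has_cycle :: "'a set \<Rightarrow> 'a set set \<Rightarrow> bool" where
  "has_cycle V E \<longleftrightarrow>
     (\<exists>cs. length cs \<ge> 3 \<and> distinct cs \<and> walk V E cs \<and> adj E (last cs) (hd cs))"

definition is_tree :: "'a set \<Rightarrow> 'a set set \<Rightarrow> bool" where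
  "is_tree V E \<longleftrightarrow> simple_graph V E \<and> V \<noteq> {} \<and> connected_graph V E \<and> \<not> has_cycle V E"

definition graph_iso :: "'a set \<Rightarrow> 'a set set \<Rightarrow> 'b set \<Rightarrow> 'b set set \<Rightarrow> bool" where
  "graph_iso V1 E1 V2 E2 \<longleftrightarrow>
     (\<exists>f. bij_betw f V1 V2 \<and> (\<forall>u\<in>V1. \<forall>v\<in>V1. {u, v} \<in> E1 \<longleftrightarrow> {f u, f v} \<in> E2))"

text \<open>Transposition corresponding to the edge e = {u,v} under labeling L
  (well defined since transpose is symmetric).\<close>
definition edge_transp :: "('a \<Rightarrow> nat) \<Rightarrow> 'a set \<Rightarrow> (nat \<Rightarrow> nat)" where
  "edge_transp L e = (SOME t. \<exists>u v. e = {u, v} \<and> u \<noteq> v \<and> t = transpose (L u) (L v))"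

definition K_elem :: "nat \<Rightarrow> ('a \<Rightarrow> nat) \<Rightarrow> 'a set list \<Rightarrow> galg" where
  "K_elem n L es = ga_scale (of_nat (fact n))
      (ga_prod n (map (\<lambda>e. ga_diff ga_one (ga_basis (edge_transp L e))) es))"

definition S_graph :: "'a set \<Rightarrow> 'a set set \<Rightarrow> galg set" where
  "S_graph V E = {K_elem (card V) L es | L es.
      bij_betw L V {1..card V} \<and> distinct es \<and> set es = E}"

end

theory Submission
  imports Defs "HOL-Library.Transitive_Closure_Table"
begin

text \<open>
  Expand the product of the factors \<open>1 - (a b)\<close> over an ordering of the labelled edges. Every
  permutation occurring in it maps each label into its own connected component of the graph. In a
  forest each edge \<open>{a, b}\<close> joins two different components of the graph of the edges after it, so
  no later term moves \<open>a\<close> to \<open>b\<close>; by induction along the ordering, the identity has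
  coefficient \<open>1\<close> and a transposition \<open>(a b)\<close> has coefficient \<open>-1\<close> if \<open>{a, b}\<close> is an
  edge and \<open>0\<close> otherwise. Hence \<open>K\<^sub>L\<^sub>,\<^sub>\<pi>(T)\<close> determines the labelled edge set of
  \<open>T\<close>, and two forests sharing an element of \<open>S\<close> are isomorphic through their labelings.
  Conversely \<open>S\<^sub>G\<close> is an isomorphism invariant.
\<close>

lemma ga_mult_one_minus_basis:
  assumes "t \<in> Sym n"
  shows "ga_mult n (ga_diff ga_one (ga_basis t)) Q \<sigma> = Q \<sigma> - Q (inv t \<circ> \<sigma>)"
proof -
  have "id \<in> Sym n" by (simp add: Sym_def permutes_id)
  moreover have "finite (Sym n)" unfolding Sym_def by (simp add: finite_permutations)
  ultimately show ?thesis using assms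
    unfolding ga_mult_def ga_diff_def ga_one_def ga_basis_def
    by (simp add: left_diff_distrib sum_subtractf if_distrib[of "\<lambda>c. c * _"] cong: if_cong)
qed

lemma transpose_in_Sym: "a \<in> {1..n} \<Longrightarrow> b \<in> {1..n} \<Longrightarrow> transpose a b \<in> Sym n"
  by (simp add: Sym_def permutes_swap_id)

lemma edge_transp_doubleton:
  assumes "u \<noteq> v"
  shows "edge_transp L {u, v} = transpose (L u) (L v)"
proof -
  let ?P = "\<lambda>t. \<exists>u' v'. {u, v} = {u', v'} \<and> u' \<noteq> v' \<and> t = transpose (L u') (L v')"
  have "?P (transpose (L u) (L v))" using assms by blast
  then have "?P (edge_transp L {u, v})" unfolding edge_transp_def by (rule someI[where P = ?P])
  then show ?thesis by (metis doubleton_eq_iff transpose_commute)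
qed

lemma simple_graph_insert_edgeE:
  assumes "simple_graph V (insert e E)"
  obtains u v where "e = {u, v}" "u \<in> V" "v \<in> V" "u \<noteq> v" and "simple_graph V E"
proof -
  from assms have "simple_graph V E" by (simp add: simple_graph_def)
  moreover from assms obtain u v where "e = {u, v}" "u \<in> V" "v \<in> V" "u \<noteq> v"
    unfolding simple_graph_def by blast
  ultimately show thesis using that by blast
qed

definition edge_prod :: "nat \<Rightarrow> nat set list \<Rightarrow> galg" where
  "edge_prod n es = ga_prod n (map (\<lambda>e. ga_diff ga_one (ga_basis (edge_transp id e))) es)"

lemma edge_prod_Nil: "edge_prod n [] \<sigma> = (if \<sigma> = id then 1 else 0)"
  by (simp add: edge_prod_def ga_prod_def ga_one_def ga_basis_def)

lemma edge_prod_Cons: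
  assumes "a \<in> {1..n}" "b \<in> {1..n}" "a \<noteq> b"
  shows "edge_prod n ({a, b} # es) \<sigma> = edge_prod n es \<sigma> - edge_prod n es (transpose a b \<circ> \<sigma>)"
  using assms ga_mult_one_minus_basis[OF transpose_in_Sym[OF assms(1,2)]]
  by (simp add: edge_prod_def ga_prod_def edge_transp_doubleton)

lemma edge_prod_support:
  assumes "simple_graph {1..n} (set es)" and "edge_prod n es \<sigma> \<noteq> 0"
  shows "(\<lambda>x y. {x, y} \<in> set es)\<^sup>*\<^sup>* x (\<sigma> x)"
  using assms
proof (induction es arbitrary: \<sigma>)
  case Nil
  then show ?case by (simp add: edge_prod_Nil split: if_splits)
next
  case (Cons e es)
  from Cons.prems(1) obtain a b where ab: "e = {a, b}" "a \<in> {1..n}" "b \<in> {1..n}" "a \<noteq> b"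
    and sg: "simple_graph {1..n} (set es)"
    by (auto elim: simple_graph_insert_edgeE)
  let ?R = "\<lambda>x y. {x, y} \<in> set (e # es)"
  have mono: "?R\<^sup>*\<^sup>* u v" if "(\<lambda>x y. {x, y} \<in> set es)\<^sup>*\<^sup>* u v" for u v
    using that mono_rtranclp[of "\<lambda>x y. {x, y} \<in> set es" ?R] by auto
  have swap: "?R\<^sup>*\<^sup>* (transpose a b y) y" for y
    by (cases "y = a \<or> y = b") (auto simp: ab insert_commute)
  from Cons.prems(2) have "edge_prod n es \<sigma> \<noteq> 0 \<or> edge_prod n es (transpose a b \<circ> \<sigma>) \<noteq> 0"
    using edge_prod_Cons[OF ab(2-4), of es \<sigma>] by (auto simp: ab)
  then show ?case
  proof
    assume "edge_prod n es \<sigma> \<noteq> 0"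
    then show ?thesis using Cons.IH[OF sg] mono by blast
  next
    assume "edge_prod n es (transpose a b \<circ> \<sigma>) \<noteq> 0"
    then have "?R\<^sup>*\<^sup>* x (transpose a b (\<sigma> x))" using Cons.IH[OF sg] mono by fastforce
    then show ?thesis using swap by (rule rtranclp_trans)
  qed
qed

fun forest_list :: "'a set list \<Rightarrow> bool" where
  "forest_list [] \<longleftrightarrow> True"
| "forest_list (e # es) \<longleftrightarrow>
     (\<forall>u\<in>e. \<forall>v\<in>e. u \<noteq> v \<longrightarrow> \<not> (\<lambda>x y. {x, y} \<in> set es)\<^sup>*\<^sup>* u v) \<and> forest_list es"

lemma forest_edge_prod_id:
  assumes "simple_graph {1..n} (set es)" and "forest_list es"
  shows "edge_prod n es id = 1"
  using assms
proof (induction es)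
  case Nil
  then show ?case by (simp add: edge_prod_Nil id_def)
next
  case (Cons e es)
  from Cons.prems(1) obtain a b where ab: "e = {a, b}" "a \<in> {1..n}" "b \<in> {1..n}" "a \<noteq> b"
    and sg: "simple_graph {1..n} (set es)"
    by (auto elim: simple_graph_insert_edgeE)
  have "edge_prod n es (transpose a b) = 0"
    using edge_prod_support[OF sg, of "transpose a b" a] Cons.prems(2) ab by auto
  then show ?case using Cons.IH[OF sg] Cons.prems(2) ab by (simp add: edge_prod_Cons comp_def)
qed

lemma forest_edge_prod_transpose:
  assumes "simple_graph {1..n} (set es)" and "forest_list es" and "x \<noteq> y"
  shows "edge_prod n es (transpose x y) = (if {x, y} \<in> set es then -1 else 0)"
  using assms(1,2)
proof (induction es)
  case Nil
  have "transpose x y \<noteq> id" using \<open>x \<noteq> y\<close> by (metis id_apply transpose_apply_first)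
  then show ?case by (simp add: edge_prod_Nil)
next
  case (Cons e es)
  from Cons.prems(1) obtain a b where ab: "e = {a, b}" "a \<in> {1..n}" "b \<in> {1..n}" "a \<noteq> b"
    and sg: "simple_graph {1..n} (set es)"
    by (auto elim: simple_graph_insert_edgeE)
  have vanish: "edge_prod n es \<tau> = 0" if "\<tau> a = b \<or> \<tau> b = a" for \<tau>
    using that edge_prod_support[OF sg, of \<tau>] Cons.prems(2) ab by auto
  show ?case
  proof (cases "{x, y} = {a, b}")
    case True
    then have "transpose x y = transpose a b" by (auto simp: doubleton_eq_iff transpose_commute)
    then show ?thesis
      using vanish[of "transpose a b"] forest_edge_prod_id[OF sg] Cons.prems(2) ab True
      by (simp add: edge_prod_Cons)
  next
    case False
    then have "(transpose a b \<circ> transpose x y) a = b \<or> (transpose a b \<circ> transpose x y) b = a"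
      using \<open>x \<noteq> y\<close> \<open>a \<noteq> b\<close> by (auto simp: transpose_def)
    then show ?thesis
      using vanish Cons.IH[OF sg] Cons.prems(2) ab False by (simp add: edge_prod_Cons)
  qed
qed

lemma forest_edge_prod_determines_edges:
  assumes "simple_graph {1..n} (set es)" "forest_list es"
    and "simple_graph {1..n} (set fs)" "forest_list fs"
    and "edge_prod n es = edge_prod n fs"
  shows "set es = set fs"
proof -
  have "set xs \<subseteq> set ys"
    if xs: "simple_graph {1..n} (set xs)" "forest_list xs"
      and ys: "simple_graph {1..n} (set ys)" "forest_list ys"
      and eq: "edge_prod n xs = edge_prod n ys" for xs ys
  proof
    fix e assume e: "e \<in> set xs"
    then obtain a b where "e = {a, b}" "a \<noteq> b" using xs(1) unfolding simple_graph_def by blast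
    then show "e \<in> set ys"
      using forest_edge_prod_transpose[OF xs, of a b] forest_edge_prod_transpose[OF ys, of a b] eq e
      by (auto split: if_splits)
  qed
  from this[OF assms] this[OF assms(3,4,1,2) assms(5)[symmetric]] show ?thesis by blast
qed

lemma simple_graph_edges_Pow: "simple_graph V E \<Longrightarrow> E \<subseteq> Pow V"
  unfolding simple_graph_def by auto

lemma has_cycle_of_path_avoiding_edge:
  assumes sg: "simple_graph V E" and e: "{u, v} \<in> E" "u \<noteq> v"
    and path: "(\<lambda>x y. {x, y} \<in> E - {{u, v}})\<^sup>*\<^sup>* u v"
  shows "has_cycle V E"
proof -
  obtain xs where xs: "rtrancl_path (\<lambda>x y. {x, y} \<in> E - {{u, v}}) u xs v" "distinct (u # xs)"
    using path by (metis rtranclp_eq_rtrancl_path rtrancl_path_distinct)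
  let ?cs = "u # xs"
  have step: "{?cs ! i, ?cs ! Suc i} \<in> E - {{u, v}}" if "i < length xs" for i
    using rtrancl_path_nth[OF xs(1) that] by simp
  have "xs \<noteq> []" using xs(1) e(2) by (auto elim: rtrancl_path.cases)
  then have last: "last ?cs = v" using rtrancl_path_last[OF xs(1)] by simp
  have "xs \<noteq> [v]" using step[of 0] by auto
  with \<open>xs \<noteq> []\<close> last have "length ?cs \<ge> 3" by (cases xs) (auto simp: Suc_le_eq split: if_splits)
  moreover have "set ?cs \<subseteq> V"
  proof -
    have "?cs ! Suc i \<in> V" if "i < length xs" for i
      using step[OF that] simple_graph_edges_Pow[OF sg] by auto
    then have "set xs \<subseteq> V" by (auto simp: in_set_conv_nth)
    then show ?thesis using e(1) simple_graph_edges_Pow[OF sg] by auto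
  qed
  then have "walk V E ?cs" using step by (simp add: walk_def adj_def)
  moreover have "adj E (last ?cs) (hd ?cs)" using e(1) last by (simp add: adj_def insert_commute)
  ultimately show ?thesis using xs(2) unfolding has_cycle_def by blast
qed

lemma forest_list_of_acyclic:
  assumes sg: "simple_graph V E" and acyclic: "\<not> has_cycle V E"
    and "distinct es" "set es \<subseteq> E"
  shows "forest_list es"
  using assms(3,4)
proof (induction es)
  case Nil
  then show ?case by simp
next
  case (Cons e es)
  have "\<not> (\<lambda>x y. {x, y} \<in> set es)\<^sup>*\<^sup>* u v" if "u \<in> e" "v \<in> e" "u \<noteq> v" for u v
  proof
    assume joined: "(\<lambda>x y. {x, y} \<in> set es)\<^sup>*\<^sup>* u v"
    have "e \<in> E" using Cons.prems by simp
    then obtain a b where "e = {a, b}" using sg unfolding simple_graph_def by blast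
    then have e: "e = {u, v}" using that by auto
    have "set es \<subseteq> E - {{u, v}}" using Cons.prems e by auto
    then have "(\<lambda>x y. {x, y} \<in> E - {{u, v}})\<^sup>*\<^sup>* u v"
      using joined mono_rtranclp[of "\<lambda>x y. {x, y} \<in> set es" "\<lambda>x y. {x, y} \<in> E - {{u, v}}"]
      by blast
    then show False
      using has_cycle_of_path_avoiding_edge[OF sg] \<open>e \<in> E\<close> e \<open>u \<noteq> v\<close> acyclic by blast
  qed
  then show ?case using Cons by simp
qed

lemma has_cycle_inj_hom:
  assumes "inj_on g W" "g ` W \<subseteq> V" "\<And>x y. {x, y} \<in> F \<Longrightarrow> {g x, g y} \<in> E"
    and "has_cycle W F"
  shows "has_cycle V E"
proof -
  obtain cs where cs: "length cs \<ge> 3" "distinct cs" "walk W F cs" "adj F (last cs) (hd cs)"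
    using assms(4) unfolding has_cycle_def by blast
  have "cs \<noteq> []" "set cs \<subseteq> W" using cs(3) by (simp_all add: walk_def)
  then have "distinct (map g cs) \<and> walk V E (map g cs) \<and> adj E (last (map g cs)) (hd (map g cs))"
    using cs assms(1-3) by (auto simp: walk_def adj_def distinct_map last_map hd_map
        intro: inj_on_subset)
  then show ?thesis using cs(1) unfolding has_cycle_def by (metis length_map)
qed

lemma simple_graph_image:
  assumes "simple_graph V E" "inj_on L V"
  shows "simple_graph (L ` V) ((`) L ` E)"
  using assms unfolding simple_graph_def by (fastforce simp: inj_on_eq_iff)

lemma forest_list_relabel:
  assumes sg: "simple_graph V E" and acyclic: "\<not> has_cycle V E" and inj: "inj_on L V"
    and es: "distinct es" "set es \<subseteq> E"
  shows "forest_list (map ((`) L) es)"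
proof (rule forest_list_of_acyclic)
  have Pow: "E \<subseteq> Pow V" using sg by (rule simple_graph_edges_Pow)
  show "simple_graph (L ` V) ((`) L ` E)" using sg inj by (rule simple_graph_image)
  show "\<not> has_cycle (L ` V) ((`) L ` E)"
  proof
    assume "has_cycle (L ` V) ((`) L ` E)"
    moreover have "{inv_into V L x, inv_into V L y} \<in> E" if "{x, y} \<in> (`) L ` E" for x y
    proof -
      from that obtain e where e: "e \<in> E" "{x, y} = L ` e" by blast
      then have "inv_into V L ` {x, y} = e"
        using inj Pow inv_into_image_cancel by (metis PowD subsetD)
      then show ?thesis using e(1) by simp
    qed
    moreover have "inj_on (inv_into V L) (L ` V)" by (rule inj_on_inv_into) simp
    moreover have "inv_into V L ` L ` V \<subseteq> V" by (auto intro: inv_into_into)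
    ultimately have "has_cycle V E" using has_cycle_inj_hom by metis
    then show False using acyclic by blast
  qed
  show "distinct (map ((`) L) es)"
    using es inj_on_subset[OF inj_on_image_Pow[OF inj]] Pow by (auto simp: distinct_map)
  show "set (map ((`) L) es) \<subseteq> (`) L ` E" using es by auto
qed

lemma K_elem_relabel:
  assumes "simple_graph V E" "inj_on L V" "set es \<subseteq> E"
  shows "K_elem n L es = ga_scale (of_nat (fact n)) (edge_prod n (map ((`) L) es))"
proof -
  have "edge_transp L e = edge_transp id (L ` e)" if "e \<in> set es" for e
  proof -
    have "e \<in> E" using assms(3) that by blast
    then obtain u v where uv: "e = {u, v}" "u \<noteq> v" "u \<in> V" "v \<in> V"
      using assms(1) unfolding simple_graph_def by blast
    then have "L u \<noteq> L v" using assms(2) by (meson inj_on_eq_iff)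
    then show ?thesis using uv by (simp add: edge_transp_doubleton)
  qed
  then show ?thesis by (simp add: K_elem_def edge_prod_def cong: map_cong)
qed

lemma ga_scale_cancel: "ga_scale c f = ga_scale c g \<Longrightarrow> c \<noteq> 0 \<Longrightarrow> f = g"
  by (auto simp: ga_scale_def fun_eq_iff)

lemma graph_iso_of_relabelled_edges_eq:
  assumes L1: "bij_betw L1 V1 N" and L2: "bij_betw L2 V2 N"
    and Pow: "E1 \<subseteq> Pow V1" "E2 \<subseteq> Pow V2"
    and eq: "(`) L1 ` E1 = (`) L2 ` E2"
  shows "graph_iso V1 E1 V2 E2"
proof -
  define f where "f = inv_into V2 L2 \<circ> L1"
  have bij: "bij_betw f V1 V2"
    unfolding f_def using L1 bij_betw_inv_into[OF L2] by (rule bij_betw_trans)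
  have L2f: "L2 (f u) = L1 u" if "u \<in> V1" for u
    using that L1 L2 by (auto simp: f_def bij_betw_def f_inv_into_f)
  have inj: "inj_on ((`) L1) (Pow V1)" "inj_on ((`) L2) (Pow V2)"
    using L1 L2 by (auto simp: bij_betw_def intro: inj_on_image_Pow)
  have "{u, v} \<in> E1 \<longleftrightarrow> {f u, f v} \<in> E2" if "u \<in> V1" "v \<in> V1" for u v
  proof -
    have "f u \<in> V2" "f v \<in> V2" using bij that by (auto simp: bij_betw_def)
    have "{u, v} \<in> E1 \<longleftrightarrow> L1 ` {u, v} \<in> (`) L1 ` E1"
      using inj_on_image_mem_iff[OF inj(1), of "{u, v}" E1] Pow(1) that by simp
    also have "\<dots> \<longleftrightarrow> L2 ` {f u, f v} \<in> (`) L2 ` E2" using eq L2f that by simp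
    also have "\<dots> \<longleftrightarrow> {f u, f v} \<in> E2"
      using inj_on_image_mem_iff[OF inj(2), of "{f u, f v}" E2] Pow(2) \<open>f u \<in> V2\<close> \<open>f v \<in> V2\<close> by simp
    finally show ?thesis .
  qed
  then show ?thesis unfolding graph_iso_def using bij by blast
qed

lemma graph_iso_of_S_graph_meet:
  assumes sg1: "simple_graph V1 E1" and acyclic1: "\<not> has_cycle V1 E1"
    and sg2: "simple_graph V2 E2" and acyclic2: "\<not> has_cycle V2 E2"
    and card: "card V1 = card V2" and meet: "S_graph V1 E1 \<inter> S_graph V2 E2 \<noteq> {}"
  shows "graph_iso V1 E1 V2 E2"
proof -
  let ?n = "card V1"
  from meet obtain K where "K \<in> S_graph V1 E1" "K \<in> S_graph V2 E2" by blast
  then obtain L1 es1 L2 es2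
    where L1: "bij_betw L1 V1 {1..?n}" and es1: "distinct es1" "set es1 = E1"
      and L2: "bij_betw L2 V2 {1..?n}" and es2: "distinct es2" "set es2 = E2"
      and K: "K_elem ?n L1 es1 = K_elem ?n L2 es2"
    unfolding S_graph_def card by blast
  have inj: "inj_on L1 V1" "inj_on L2 V2" using L1 L2 by (auto simp: bij_betw_def)
  have "edge_prod ?n (map ((`) L1) es1) = edge_prod ?n (map ((`) L2) es2)"
    using K K_elem_relabel[OF sg1 inj(1), of es1] K_elem_relabel[OF sg2 inj(2), of es2] es1 es2
    by (auto elim: ga_scale_cancel)
  moreover have "simple_graph {1..?n} (set (map ((`) L1) es1))"
    using simple_graph_image[OF sg1 inj(1)] bij_betw_imp_surj_on[OF L1] es1 by simp
  moreover have "simple_graph {1..?n} (set (map ((`) L2) es2))"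
    using simple_graph_image[OF sg2 inj(2)] bij_betw_imp_surj_on[OF L2] es2 by simp
  moreover have "forest_list (map ((`) L1) es1)" "forest_list (map ((`) L2) es2)"
    using forest_list_relabel[OF sg1 acyclic1 inj(1)] forest_list_relabel[OF sg2 acyclic2 inj(2)]
      es1 es2 by simp_all
  ultimately have "(`) L1 ` E1 = (`) L2 ` E2"
    using forest_edge_prod_determines_edges es1(2) es2(2) by (metis set_map)
  then show ?thesis
    using graph_iso_of_relabelled_edges_eq[OF L1 L2] simple_graph_edges_Pow[OF sg1]
      simple_graph_edges_Pow[OF sg2] by blast
qed


lemma edges_image_of_graph_iso:
  assumes f: "bij_betw f V1 V2" and iso: "\<forall>u\<in>V1. \<forall>v\<in>V1. {u, v} \<in> E1 \<longleftrightarrow> {f u, f v} \<in> E2"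
    and sg1: "simple_graph V1 E1" and sg2: "simple_graph V2 E2"
  shows "(`) f ` E1 = E2"
proof
  show "(`) f ` E1 \<subseteq> E2"
  proof
    fix e' assume "e' \<in> (`) f ` E1"
    then obtain e where e: "e \<in> E1" "e' = f ` e" by blast
    then obtain u v where "e = {u, v}" "u \<in> V1" "v \<in> V1" using sg1 unfolding simple_graph_def by blast
    then show "e' \<in> E2" using e iso by auto
  qed
  show "E2 \<subseteq> (`) f ` E1"
  proof
    fix e' assume e': "e' \<in> E2"
    then obtain x y where xy: "e' = {x, y}" "x \<in> V2" "y \<in> V2"
      using sg2 unfolding simple_graph_def by blast
    then obtain u v where uv: "u \<in> V1" "v \<in> V1" "x = f u" "y = f v"
      using f unfolding bij_betw_def by blast
    then have "{u, v} \<in> E1" using iso e' xy by blast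
    moreover have "e' = f ` {u, v}" using xy uv by simp
    ultimately show "e' \<in> (`) f ` E1" by blast
  qed
qed

lemma S_graph_subset_of_graph_iso:
  assumes iso: "graph_iso V1 E1 V2 E2" and sg1: "simple_graph V1 E1" and sg2: "simple_graph V2 E2"
  shows "S_graph V1 E1 \<subseteq> S_graph V2 E2"
proof
  fix K assume "K \<in> S_graph V1 E1"
  then obtain L1 es1 where K: "K = K_elem (card V1) L1 es1"
    and L1: "bij_betw L1 V1 {1..card V1}" and es1: "distinct es1" "set es1 = E1"
    unfolding S_graph_def by blast
  obtain f where f: "bij_betw f V1 V2" and f_edges: "\<forall>u\<in>V1. \<forall>v\<in>V1. {u, v} \<in> E1 \<longleftrightarrow> {f u, f v} \<in> E2"
    using iso unfolding graph_iso_def by blast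
  define L2 where "L2 = L1 \<circ> inv_into V1 f"
  define es2 where "es2 = map ((`) f) es1"
  have card: "card V2 = card V1" using f by (simp add: bij_betw_same_card)
  have L2: "bij_betw L2 V2 {1..card V2}"
    unfolding L2_def card using bij_betw_inv_into[OF f] L1 by (rule bij_betw_trans)
  have Pow: "E1 \<subseteq> Pow V1" using sg1 by (rule simple_graph_edges_Pow)
  have inj: "inj_on f V1" using f by (simp add: bij_betw_def)
  have es2: "distinct es2" "set es2 = E2"
    using es1 inj_on_subset[OF inj_on_image_Pow[OF inj] Pow]
      edges_image_of_graph_iso[OF f f_edges sg1 sg2]
    by (simp_all add: es2_def distinct_map)
  have "map ((`) L2) es2 = map ((`) L1) es1"
  proof -
    have "L2 ` f ` e = L1 ` e" if "e \<in> set es1" for e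
    proof -
      have "e \<subseteq> V1" using that es1(2) Pow by blast
      then show ?thesis
        by (simp only: L2_def image_comp[symmetric] inv_into_image_cancel[OF inj])
    qed
    then show ?thesis by (simp add: es2_def)
  qed
  moreover have "inj_on L1 V1" "inj_on L2 V2" using L1 L2 by (auto simp: bij_betw_def)
  ultimately have "K = K_elem (card V2) L2 es2"
    using K K_elem_relabel[OF sg1, of L1 es1] K_elem_relabel[OF sg2, of L2 es2] es1 es2 card
    by simp
  then show "K \<in> S_graph V2 E2" using L2 es2 unfolding S_graph_def by blast
qed

lemma S_graph_nonempty:
  assumes "simple_graph V E"
  shows "S_graph V E \<noteq> {}"
proof -
  have "finite V" using assms by (simp add: simple_graph_def)
  then obtain h where "bij_betw h {1..card V} V" using ex_bij_betw_nat_finite_1 by blast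
  then have L: "bij_betw (inv_into {1..card V} h) V {1..card V}" by (rule bij_betw_inv_into)
  have "finite E"
    using \<open>finite V\<close> simple_graph_edges_Pow[OF assms] by (simp add: finite_subset)
  then obtain es where "set es = E" "distinct es" using finite_distinct_list by blast
  then show ?thesis using L unfolding S_graph_def by blast
qed

theorem mainTheorem8:
  fixes V1 :: "'a set" and E1 :: "'a set set" and V2 :: "'b set" and E2 :: "'b set set"
    and n :: nat
  assumes "is_tree V1 E1" and "is_tree V2 E2"
    and "card V1 = n" and "card V2 = n"
  shows "S_graph V1 E1 \<inter> S_graph V2 E2 \<noteq> {} \<longleftrightarrow> graph_iso V1 E1 V2 E2"
proof
  have sg1: "simple_graph V1 E1" and acyclic1: "\<not> has_cycle V1 E1"
    and sg2: "simple_graph V2 E2" and acyclic2: "\<not> has_cycle V2 E2"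
    using assms(1,2) by (simp_all add: is_tree_def)
  show "S_graph V1 E1 \<inter> S_graph V2 E2 \<noteq> {} \<Longrightarrow> graph_iso V1 E1 V2 E2"
    using graph_iso_of_S_graph_meet[OF sg1 acyclic1 sg2 acyclic2] assms(3,4) by simp
  show "graph_iso V1 E1 V2 E2 \<Longrightarrow> S_graph V1 E1 \<inter> S_graph V2 E2 \<noteq> {}"
    using S_graph_subset_of_graph_iso[OF _ sg1 sg2] S_graph_nonempty[OF sg1] by blast
qed

end
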